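(* Let $\{p^\circ_{(R,\alpha)}\}_{(R,\alpha)}$ be a replacement rule satisfying the Fixation Axiom and representing neutral drift, and fix $u\in(0,1]$. For $\nu\in(0,1)$ let $\pi^{\nu}_{\mathrm{MSS}}$ denote the mutation–selection stationary distribution with mutation probability $u$ and mutational bias $\nu$. Then for every state $\mathbf{x}\in\{0,1\}^G$, $\pi^{\nu}_{\mathrm{MSS}}(\mathbf{x})=\pi^{1-\nu}_{\mathrm{MSS}}(\bar{\mathbf{x}})$, where $\bar x_g=1-x_g$ for all $g\in G$.
   Context: Setting. $G$ is a finite nonempty set of genetic sites; a state is $\mathbf{x}\in\{0,1\}^G$. A replacement event is $(R,\alpha)$ with $R\subseteq G$, $\alpha:R\to G$. A replacement rule representing neutral drift is a single probability distribution $\{p^\circ_{(R,\alpha)}\}$ over events, used in every state. With mutation probability $u\in[0,1]$ and bias $\nu\in(0,1)$, the evolutionary Markov chain moves from $\mathbf{x}$: draw $(R,\alpha)$ with probability $p^\circ_{(R,\alpha)}$; independently for $g\in R$, $x'_g=x_{\alpha(g)}$ w.p. $1-u$, $x'_g=1$ w.p. $u\nu$, $x'_g=0$ w.p. $u(1-\nu)$; $x'_g=x_g$ for $g\notin R$. Fixation Axiom: there exist $g\in G$, $m\ge1$, events $(R_k,\alpha_k)_{k=1}^m$ with $p^\circ_{(R_k,\alpha_k)}>0$, $g\in R_k$ for some $k$, and $\tilde\alpha_1\circ\cdots\circ\tilde\alpha_m(h)=g$ for all $h$, where $\tilde\alpha_k$ equals $\alpha_k$ on $R_k$ and the identity elsewhere.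 For $u>0$ this chain has a unique stationary distribution, the mutation–selection stationary distribution. *)

theory Defs
  imports Complex_Main
begin

text \<open>States: x \<in> {0,1}^G, represented as Boolean functions on the site type that are
  False outside G (True = 1, False = 0).\<close>
definition states :: "'g set \<Rightarrow> ('g \<Rightarrow> bool) set" where
  "states G = {x. \<forall>g. g \<notin> G \<longrightarrow> \<not> x g}"

definition flip :: "'g set \<Rightarrow> ('g \<Rightarrow> bool) \<Rightarrow> ('g \<Rightarrow> bool)" where
  "flip G x = (\<lambda>g. g \<in> G \<and> \<not> x g)"

text \<open>Replacement events (R, alpha) with R \<subseteq> G, alpha : R \<rightarrow> G.  The map alpha is
  stored extensionally as the identity outside R (i.e. it is the extended map alpha-tilde).\<close>
definition events :: "'g set \<Rightarrow> ('g set \<times> ('g \<Rightarrow> 'g)) set" where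
  "events G = {(R, \<alpha>). R \<subseteq> G \<and> (\<forall>g\<in>R. \<alpha> g \<in> G) \<and> (\<forall>g. g \<notin> R \<longrightarrow> \<alpha> g = g)}"

text \<open>A replacement rule representing neutral drift: one probability distribution over events.\<close>
definition replacement_rule :: "'g set \<Rightarrow> ('g set \<times> ('g \<Rightarrow> 'g) \<Rightarrow> real) \<Rightarrow> bool" where
  "replacement_rule G p \<longleftrightarrow>
     (\<forall>e\<in>events G. p e \<ge> 0) \<and> (\<forall>e. e \<notin> events G \<longrightarrow> p e = 0) \<and>
     (\<Sum>e\<in>events G. p e) = 1"

definition fixation_axiom :: "'g set \<Rightarrow> ('g set \<times> ('g \<Rightarrow> 'g) \<Rightarrow> real) \<Rightarrow> bool" where
  "fixation_axiom G p \<longleftrightarrow>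
     (\<exists>g\<in>G. \<exists>es. length es \<ge> 1 \<and> (\<forall>e\<in>set es. p e > 0) \<and> (\<exists>e\<in>set es. g \<in> fst e) \<and>
        (\<forall>h\<in>G. foldr (\<circ>) (map snd es) id h = g))"

definition site_prob :: "real \<Rightarrow> real \<Rightarrow> bool \<Rightarrow> bool \<Rightarrow> real" where
  "site_prob u \<nu> a b = (1 - u) * (if b = a then 1 else 0) + (if b then u * \<nu> else u * (1 - \<nu>))"

definition trans_prob ::
  "'g set \<Rightarrow> ('g set \<times> ('g \<Rightarrow> 'g) \<Rightarrow> real) \<Rightarrow> real \<Rightarrow> real \<Rightarrow> ('g \<Rightarrow> bool) \<Rightarrow> ('g \<Rightarrow> bool) \<Rightarrow> real" where
  "trans_prob G p u \<nu> x y =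
     (\<Sum>e\<in>events G. p e *
        (\<Prod>g\<in>fst e. site_prob u \<nu> (x (snd e g)) (y g)) *
        (\<Prod>g\<in>G - fst e. if y g = x g then 1 else 0))"

definition stationary ::
  "'g set \<Rightarrow> ('g set \<times> ('g \<Rightarrow> 'g) \<Rightarrow> real) \<Rightarrow> real \<Rightarrow> real \<Rightarrow> (('g \<Rightarrow> bool) \<Rightarrow> real) \<Rightarrow> bool" where
  "stationary G p u \<nu> \<pi> \<longleftrightarrow>
     (\<forall>x\<in>states G. \<pi> x \<ge> 0) \<and> (\<Sum>x\<in>states G. \<pi> x) = 1 \<and>
     (\<forall>y\<in>states G. \<pi> y = (\<Sum>x\<in>states G. \<pi> x * trans_prob G p u \<nu> x y))"

end

theory Submission
  imports Defs
begin

text \<open>Complementing every site and exchanging \<open>\<nu>\<close> with \<open>1 - \<nu>\<close> leaves the transition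
  probabilities unchanged, so a stationary distribution for bias \<open>1 - \<nu>\<close>, composed with the
  flip, is stationary for bias \<open>\<nu>\<close>.
  For \<open>u > 0\<close> the chain is irreducible: the events of the Fixation Axiom together replace
  every site, and mutation lets each replaced site take either value, so any state can be
  driven to any other.  A finite irreducible chain has only one stationary distribution.\<close>

definition invariant_on :: "'s set \<Rightarrow> ('s \<Rightarrow> 's \<Rightarrow> real) \<Rightarrow> ('s \<Rightarrow> real) \<Rightarrow> bool" where
  "invariant_on S P \<mu> \<longleftrightarrow> (\<forall>y\<in>S. \<mu> y = (\<Sum>x\<in>S. \<mu> x * P x y))"

definition stationary_on :: "'s set \<Rightarrow> ('s \<Rightarrow> 's \<Rightarrow> real) \<Rightarrow> ('s \<Rightarrow> real) \<Rightarrow> bool" where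
  "stationary_on S P \<pi> \<longleftrightarrow> (\<forall>x\<in>S. 0 \<le> \<pi> x) \<and> sum \<pi> S = 1 \<and> invariant_on S P \<pi>"

definition reaches :: "'s set \<Rightarrow> ('s \<Rightarrow> 's \<Rightarrow> real) \<Rightarrow> 's \<Rightarrow> 's \<Rightarrow> bool" where
  "reaches S P = (\<lambda>x y. x \<in> S \<and> y \<in> S \<and> 0 < P x y)\<^sup>*\<^sup>*"

definition irreducible_on :: "'s set \<Rightarrow> ('s \<Rightarrow> 's \<Rightarrow> real) \<Rightarrow> bool" where
  "irreducible_on S P \<longleftrightarrow> (\<forall>x\<in>S. \<forall>y\<in>S. reaches S P x y)"

lemma invariant_on_pos_reaches:
  assumes "finite S" and "\<forall>x\<in>S. 0 \<le> \<mu> x" and "\<forall>x\<in>S. \<forall>y\<in>S. 0 \<le> P x y"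
    and "invariant_on S P \<mu>" and "reaches S P x y" and "0 < \<mu> x"
  shows "0 < \<mu> y"
  using assms(5,6) unfolding reaches_def
proof (induction rule: rtranclp_induct)
  case (step y z)
  then have "y \<in> S" "z \<in> S" "0 < P y z" "0 < \<mu> y" by auto
  then have "0 < \<mu> y * P y z" by simp
  also have "\<dots> \<le> (\<Sum>x\<in>S. \<mu> x * P x z)"
    by (rule member_le_sum) (use assms(1-3) \<open>y \<in> S\<close> \<open>z \<in> S\<close> in auto)
  also have "\<dots> = \<mu> z"
    using assms(4) \<open>z \<in> S\<close> by (simp add: invariant_on_def)
  finally show ?case .
qed

lemma irreducible_invariant_on_zero:
  assumes "finite S" and "irreducible_on S P" and "\<forall>x\<in>S. \<forall>y\<in>S. 0 \<le> P x y"
    and "\<forall>x\<in>S. 0 \<le> \<mu> x" and "invariant_on S P \<mu>" and "x\<^sub>0 \<in> S" and "\<mu> x\<^sub>0 = 0"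
  shows "\<forall>x\<in>S. \<mu> x = 0"
proof (rule ccontr)
  assume "\<not> (\<forall>x\<in>S. \<mu> x = 0)"
  then obtain x where "x \<in> S" "0 < \<mu> x"
    using assms(4) by force
  moreover have "reaches S P x x\<^sub>0"
    using assms(2,6) \<open>x \<in> S\<close> by (simp add: irreducible_on_def)
  ultimately have "0 < \<mu> x\<^sub>0"
    using invariant_on_pos_reaches[OF assms(1,4,3,5)] by blast
  with assms(7) show False by simp
qed

lemma irreducible_stationary_on_pos:
  assumes "finite S" and "irreducible_on S P" and "\<forall>x\<in>S. \<forall>y\<in>S. 0 \<le> P x y"
    and "stationary_on S P \<pi>" and "x \<in> S"
  shows "0 < \<pi> x"
proof (rule ccontr)
  assume "\<not> 0 < \<pi> x"
  moreover have "0 \<le> \<pi> x"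
    using assms(4,5) by (simp add: stationary_on_def)
  ultimately have "\<pi> x = 0" by simp
  with assms have "\<forall>x\<in>S. \<pi> x = 0"
    by (intro irreducible_invariant_on_zero[of S P \<pi> x]) (auto simp: stationary_on_def)
  then have "sum \<pi> S = 0" by simp
  with assms(4) show False by (simp add: stationary_on_def)
qed

text \<open>With \<open>t\<close> the least ratio \<open>\<pi> x / \<rho> x\<close>, the measure \<open>\<pi> - t \<rho>\<close> is nonnegative, invariant
  and vanishes somewhere, hence everywhere; normalisation then forces \<open>t = 1\<close>.\<close>

lemma irreducible_stationary_on_unique:
  assumes fin: "finite S" and irr: "irreducible_on S P" and P_nonneg: "\<forall>x\<in>S. \<forall>y\<in>S. 0 \<le> P x y"
    and \<pi>: "stationary_on S P \<pi>" and \<rho>: "stationary_on S P \<rho>"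
  shows "\<forall>x\<in>S. \<pi> x = \<rho> x"
proof -
  have \<rho>_pos: "0 < \<rho> x" if "x \<in> S" for x
    using irreducible_stationary_on_pos[OF fin irr P_nonneg \<rho> that] .
  have "S \<noteq> {}"
    using \<rho> by (auto simp: stationary_on_def)
  define t where "t = Min ((\<lambda>x. \<pi> x / \<rho> x) ` S)"
  have "t \<in> (\<lambda>x. \<pi> x / \<rho> x) ` S"
    unfolding t_def using fin \<open>S \<noteq> {}\<close> by (intro Min_in) auto
  then obtain x\<^sub>0 where x\<^sub>0: "x\<^sub>0 \<in> S" "t = \<pi> x\<^sub>0 / \<rho> x\<^sub>0" by blast
  define \<mu> where "\<mu> = (\<lambda>x. \<pi> x - t * \<rho> x)"
  have \<mu>_nonneg: "\<forall>x\<in>S. 0 \<le> \<mu> x"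
  proof
    fix x assume "x \<in> S"
    have "t \<le> \<pi> x / \<rho> x"
      unfolding t_def using fin \<open>x \<in> S\<close> by (intro Min_le) auto
    then show "0 \<le> \<mu> x"
      using \<rho>_pos[OF \<open>x \<in> S\<close>] by (simp add: \<mu>_def pos_le_divide_eq)
  qed
  have \<mu>_invariant: "invariant_on S P \<mu>"
    using \<pi> \<rho> by (simp add: stationary_on_def invariant_on_def \<mu>_def algebra_simps
        sum_subtractf sum_distrib_left)
  have "\<mu> x\<^sub>0 = 0"
    using x\<^sub>0 \<rho>_pos[OF x\<^sub>0(1)] by (simp add: \<mu>_def)
  then have "\<forall>x\<in>S. \<mu> x = 0"
    by (rule irreducible_invariant_on_zero[OF fin irr P_nonneg \<mu>_nonneg \<mu>_invariant x\<^sub>0(1)])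
  then have \<pi>_eq: "\<forall>x\<in>S. \<pi> x = t * \<rho> x"
    by (simp add: \<mu>_def)
  have "1 = (\<Sum>x\<in>S. t * \<rho> x)"
    using \<pi> \<pi>_eq by (simp add: stationary_on_def)
  also have "\<dots> = t"
    using \<rho> by (simp add: stationary_on_def flip: sum_distrib_left)
  finally show ?thesis
    using \<pi>_eq by simp
qed

lemma finite_states: "finite G \<Longrightarrow> finite (states G)"
proof -
  assume "finite G"
  have "states G = (\<lambda>S g. g \<in> S) ` Pow G"
  proof (intro equalityI subsetI)
    fix x assume "x \<in> states G"
    then have "x = (\<lambda>g. g \<in> {g\<in>G. x g})"
      by (auto simp: states_def)
    then show "x \<in> (\<lambda>S g. g \<in> S) ` Pow G" by blast
  qed (auto simp: states_def)
  with \<open>finite G\<close> show ?thesis by simp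
qed

lemma stationary_iff_stationary_on:
  "stationary G p u \<nu> \<pi> \<longleftrightarrow> stationary_on (states G) (trans_prob G p u \<nu>) \<pi>"
  by (simp add: stationary_def stationary_on_def invariant_on_def)

lemma finite_events: "replacement_rule G p \<Longrightarrow> finite (events G)"
  by (rule ccontr) (simp add: replacement_rule_def)

lemma fst_event_subset: "e \<in> events G \<Longrightarrow> fst e \<subseteq> G"
  by (auto simp: events_def)

lemma replacement_rule_pos_imp_event: "replacement_rule G p \<Longrightarrow> 0 < p e \<Longrightarrow> e \<in> events G"
  unfolding replacement_rule_def by (metis less_irrefl)

lemma site_prob_nonneg: "0 \<le> u \<Longrightarrow> u \<le> 1 \<Longrightarrow> 0 \<le> \<nu> \<Longrightarrow> \<nu> \<le> 1 \<Longrightarrow> 0 \<le> site_prob u \<nu> a b"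
  by (simp add: site_prob_def)

lemma site_prob_pos: "0 < u \<Longrightarrow> u \<le> 1 \<Longrightarrow> 0 < \<nu> \<Longrightarrow> \<nu> < 1 \<Longrightarrow> 0 < site_prob u \<nu> a b"
  by (simp add: site_prob_def add_nonneg_pos)

lemma site_prob_flip: "site_prob u (1 - \<nu>) (\<not> a) (\<not> b) = site_prob u \<nu> a b"
  by (auto simp: site_prob_def)

lemma trans_prob_term_nonneg:
  assumes "replacement_rule G p" and "0 \<le> u" "u \<le> 1" "0 \<le> \<nu>" "\<nu> \<le> 1" and "e \<in> events G"
  shows "0 \<le> p e * (\<Prod>g\<in>fst e. site_prob u \<nu> (x (snd e g)) (y g)) *
                (\<Prod>g\<in>G - fst e. if y g = x g then 1 else 0)"
  using assms by (intro mult_nonneg_nonneg prod_nonneg) (auto simp: replacement_rule_def site_prob_nonneg)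

lemma trans_prob_nonneg:
  assumes "replacement_rule G p" and "0 \<le> u" "u \<le> 1" "0 \<le> \<nu>" "\<nu> \<le> 1"
  shows "0 \<le> trans_prob G p u \<nu> x y"
  unfolding trans_prob_def using trans_prob_term_nonneg[OF assms] by (simp add: sum_nonneg)

text \<open>Since \<open>u > 0\<close>, mutation gives each replaced site either value with positive probability.\<close>

lemma trans_prob_pos:
  assumes rule: "replacement_rule G p" and "0 < u" "u \<le> 1" "0 < \<nu>" "\<nu> < 1"
    and "0 < p e" and agree: "\<forall>g\<in>G - fst e. y g = x g"
  shows "0 < trans_prob G p u \<nu> x y"
proof -
  let ?term = "\<lambda>e. p e * (\<Prod>g\<in>fst e. site_prob u \<nu> (x (snd e g)) (y g)) *
        (\<Prod>g\<in>G - fst e. if y g = x g then 1 else 0)"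
  have "(\<Prod>g\<in>G - fst e. if y g = x g then 1 else 0) = (1::real)"
    using agree by (intro prod.neutral) auto
  then have "0 < ?term e"
    using assms(2-6) by (simp add: site_prob_pos prod_pos)
  also have "\<dots> \<le> (\<Sum>e\<in>events G. ?term e)"
    using assms(2-5) replacement_rule_pos_imp_event[OF rule \<open>0 < p e\<close>]
    by (intro member_le_sum finite_events[OF rule] trans_prob_term_nonneg[OF rule]) auto
  finally show ?thesis
    unfolding trans_prob_def .
qed

lemma flip_in_states: "flip G x \<in> states G"
  by (simp add: states_def flip_def)

lemma flip_flip: "x \<in> states G \<Longrightarrow> flip G (flip G x) = x"
  by (auto simp: states_def flip_def)

lemma sum_states_flip: "(\<Sum>x\<in>states G. f (flip G x)) = (\<Sum>x\<in>states G. f x)"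
  by (rule sum.reindex_bij_witness[where i="flip G" and j="flip G"])
     (auto simp: flip_in_states flip_flip)

lemma trans_prob_flip:
  "trans_prob G p u (1 - \<nu>) (flip G x) (flip G y) = trans_prob G p u \<nu> x y"
  unfolding trans_prob_def
proof (intro sum.cong refl arg_cong2[where f = "(*)"])
  fix e assume "e \<in> events G"
  then have "g \<in> G" "snd e g \<in> G" if "g \<in> fst e" for g
    using that by (auto simp: events_def)
  then show "(\<Prod>g\<in>fst e. site_prob u (1 - \<nu>) (flip G x (snd e g)) (flip G y g))
      = (\<Prod>g\<in>fst e. site_prob u \<nu> (x (snd e g)) (y g))"
    by (intro prod.cong) (simp_all add: flip_def site_prob_flip)
  show "(\<Prod>g\<in>G - fst e. if flip G y g = flip G x g then 1 else 0)
      = (\<Prod>g\<in>G - fst e. if y g = x g then 1 else (0::real))"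
    by (intro prod.cong) (auto simp: flip_def)
qed

lemma stationary_flip:
  assumes "stationary G p u (1 - \<nu>) \<pi>"
  shows "stationary G p u \<nu> (\<lambda>x. \<pi> (flip G x))"
  unfolding stationary_def
proof (intro conjI ballI)
  fix y
  have "\<pi> (flip G y) = (\<Sum>x\<in>states G. \<pi> x * trans_prob G p u (1 - \<nu>) x (flip G y))"
    using assms flip_in_states unfolding stationary_def by blast
  also have "\<dots> = (\<Sum>x\<in>states G. \<pi> (flip G x) * trans_prob G p u (1 - \<nu>) (flip G x) (flip G y))"
    by (rule sum_states_flip[symmetric])
  also have "\<dots> = (\<Sum>x\<in>states G. \<pi> (flip G x) * trans_prob G p u \<nu> x y)"
    by (simp add: trans_prob_flip)
  finally show "\<pi> (flip G y) = (\<Sum>x\<in>states G. \<pi> (flip G x) * trans_prob G p u \<nu> x y)" .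
qed (use assms flip_in_states sum_states_flip[of \<pi>] in \<open>auto simp: stationary_def\<close>)

lemma reaches_override_on_replaced:
  assumes rule: "replacement_rule G p" and params: "0 < u" "u \<le> 1" "0 < \<nu>" "\<nu> < 1"
    and "\<forall>e\<in>set es. 0 < p e" and "x \<in> states G" and y: "y \<in> states G"
  shows "reaches (states G) (trans_prob G p u \<nu>) x (override_on x y (\<Union>e\<in>set es. fst e))"
  using assms(6,7)
proof (induction es arbitrary: x)
  case Nil
  then show ?case by (simp add: reaches_def)
next
  case (Cons e es)
  define x' where "x' = override_on x y (fst e)"
  have "e \<in> events G"
    using Cons.prems(1) replacement_rule_pos_imp_event[OF rule] by simp
  then have "x' \<in> states G"
    using Cons.prems(2) y by (auto simp: x'_def override_on_def states_def events_def)
  moreover have "0 < trans_prob G p u \<nu> x x'"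
    using Cons.prems(1) by (intro trans_prob_pos[OF rule params]) (auto simp: x'_def)
  moreover have "reaches (states G) (trans_prob G p u \<nu>) x' (override_on x' y (\<Union>e\<in>set es. fst e))"
    using Cons.IH Cons.prems(1) \<open>x' \<in> states G\<close> by simp
  moreover have "override_on x' y (\<Union>e\<in>set es. fst e) = override_on x y (\<Union>e\<in>set (e # es). fst e)"
    by (auto simp: x'_def override_on_def)
  ultimately show ?case
    using Cons.prems(2) unfolding reaches_def by (auto intro: converse_rtranclp_into_rtranclp)
qed

lemma foldr_events_fixes:
  "\<forall>e\<in>set es. e \<in> events G \<and> h \<notin> fst e \<Longrightarrow> foldr (\<circ>) (map snd es) id h = h"
  by (induction es) (auto simp: events_def)

text \<open>A site replaced by no event of the sequence is fixed by the composite map, which is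
  constant with value \<open>g\<close> on \<open>G\<close>; and \<open>g\<close> itself is replaced by hypothesis.\<close>

lemma fixation_axiom_covers_sites:
  assumes rule: "replacement_rule G p" and "fixation_axiom G p"
  obtains es where "\<forall>e\<in>set es. 0 < p e" and "(\<Union>e\<in>set es. fst e) = G"
proof -
  obtain g es where "g \<in> G" and pos: "\<forall>e\<in>set es. 0 < p e" and "\<exists>e\<in>set es. g \<in> fst e"
    and const: "\<forall>h\<in>G. foldr (\<circ>) (map snd es) id h = g"
    using assms(2) unfolding fixation_axiom_def by blast
  have events: "e \<in> events G" if "e \<in> set es" for e
    using pos that replacement_rule_pos_imp_event[OF rule] by blast
  have "(\<Union>e\<in>set es. fst e) \<subseteq> G"
    by (intro UN_least fst_event_subset events)
  moreover have "h \<in> (\<Union>e\<in>set es. fst e)" if "h \<in> G" for h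
  proof (rule ccontr)
    assume "h \<notin> (\<Union>e\<in>set es. fst e)"
    then have "foldr (\<circ>) (map snd es) id h = h"
      using events by (intro foldr_events_fixes) auto
    with const that have "h = g" by simp
    with \<open>h \<notin> (\<Union>e\<in>set es. fst e)\<close> \<open>\<exists>e\<in>set es. g \<in> fst e\<close> show False by blast
  qed
  ultimately have "(\<Union>e\<in>set es. fst e) = G"
    by blast
  with pos show ?thesis
    by (rule that)
qed

lemma irreducible_trans_prob:
  assumes rule: "replacement_rule G p" and "fixation_axiom G p"
    and params: "0 < u" "u \<le> 1" "0 < \<nu>" "\<nu> < 1"
  shows "irreducible_on (states G) (trans_prob G p u \<nu>)"
  unfolding irreducible_on_def
proof (intro ballI)
  fix x y assume "x \<in> states G" "y \<in> states G"
  obtain es where pos: "\<forall>e\<in>set es. 0 < p e" and cover: "(\<Union>e\<in>set es. fst e) = G"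
    using fixation_axiom_covers_sites[OF assms(1,2)] .
  have "override_on x y G = y"
    using \<open>x \<in> states G\<close> \<open>y \<in> states G\<close> by (auto simp: override_on_def states_def)
  then show "reaches (states G) (trans_prob G p u \<nu>) x y"
    using reaches_override_on_replaced[OF rule params pos \<open>x \<in> states G\<close> \<open>y \<in> states G\<close>]
    by (simp add: cover)
qed

theorem proposition3:
  fixes G :: "'g set" and p :: "'g set \<times> ('g \<Rightarrow> 'g) \<Rightarrow> real"
    and u \<nu> :: real and \<pi>1 \<pi>2 :: "('g \<Rightarrow> bool) \<Rightarrow> real"
  assumes "finite G" and "G \<noteq> {}"
    and "replacement_rule G p" and "fixation_axiom G p"
    and "0 < u" and "u \<le> 1" and "0 < \<nu>" and "\<nu> < 1"
    and "stationary G p u \<nu> \<pi>1"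
    and "stationary G p u (1 - \<nu>) \<pi>2"
  shows "\<forall>x\<in>states G. \<pi>1 x = \<pi>2 (flip G x)"
proof -
  have "stationary_on (states G) (trans_prob G p u \<nu>) \<pi>1"
    using assms(9) by (simp add: stationary_iff_stationary_on)
  moreover have "stationary_on (states G) (trans_prob G p u \<nu>) (\<lambda>x. \<pi>2 (flip G x))"
    using stationary_flip[OF assms(10)] by (simp add: stationary_iff_stationary_on)
  moreover have "\<forall>x\<in>states G. \<forall>y\<in>states G. 0 \<le> trans_prob G p u \<nu> x y"
    using assms(3,5-8) by (simp add: trans_prob_nonneg)
  ultimately show ?thesis
    using irreducible_stationary_on_unique[OF finite_states[OF assms(1)]
        irreducible_trans_prob[OF assms(3-8)]] by blast
qed

end
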